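(* Fix an odd integer $u>0$. If the family $\mathcal{K}_2$ (for this $u$) is finite, then the family $\mathcal{K}_3$ (for this $u$) is finite.
   Context: For an odd prime $p$ put $p^*=(-1)^{(p-1)/2}p$; let $P^*=\{8,-4,-8\}\cup\{p^*: p\text{ odd prime}\}$, $P^*_+$ its positive and $P^*_-$ its negative elements. $E(K)$ denotes the exponent of the class group of a number field $K$. $\mathcal{K}_1$ is the family of fields $\mathbb{Q}(\sqrt{p^*})$ with $p^*\in P^*_-$ and $E(\mathbb{Q}(\sqrt{p^*}))\mid u$. $\mathcal{K}_2$ is the family of fields $\mathbb{Q}(\sqrt{p_1^*},\sqrt{p_2^*})$ with $p_1^*\in P^*_-$, $p_2^*\in P^*$, $E(\mathbb{Q}(\sqrt{p_1^*}))\mid u$, and either ($p_2^*<0$ and $E(\mathbb{Q}(\sqrt{p_2^*}))\mid u$) or ($p_2^*>0$ and $E(\mathbb{Q}(\sqrt{p_1^*p_2^*}))\mid 2u$). $\mathcal{K}_3$ is the family of fields $\mathbb{Q}(\sqrt{p_1^*},\sqrt{p_2^*},\sqrt{p_3^*})$ with $p_1^*,p_2^*\in P^*_-$, $p_3^*\in P^*$, such that $\mathbb{Q}(\sqrt{p_1^*},\sqrt{p_2^*})$, $\mathbb{Q}(\sqrt{p_1^*},\sqrt{p_3^*})$ and $\mathbb{Q}(\sqrt{p_2^*},\sqrt{p_3^*})$ all belong to $\mathcal{K}_2$. *)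

theory Defs
  imports Complex_Main "HOL-Computational_Algebra.Polynomial"
begin

definition pstar :: "int \<Rightarrow> int" where
  "pstar p = (-1) ^ nat ((p - 1) div 2) * p"

definition Pstar :: "int set" where
  "Pstar = {8, -4, -8} \<union> {pstar p | p. prime p \<and> odd p}"

definition Pstar_pos :: "int set" where "Pstar_pos = {q \<in> Pstar. q > 0}"
definition Pstar_neg :: "int set" where "Pstar_neg = {q \<in> Pstar. q < 0}"

definition is_subfield :: "complex set \<Rightarrow> bool" where
  "is_subfield F \<longleftrightarrow> 0 \<in> F \<and> 1 \<in> F \<and> (\<forall>x\<in>F. \<forall>y\<in>F. x + y \<in> F \<and> x * y \<in> F)
     \<and> (\<forall>x\<in>F. - x \<in> F \<and> inverse x \<in> F)"

definition gen_field :: "complex set \<Rightarrow> complex set" where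
  "gen_field S = \<Inter> {F. is_subfield F \<and> S \<subseteq> F}"

definition QS :: "int set \<Rightarrow> complex set" where
  "QS A = gen_field ((\<lambda>a. csqrt (of_int a)) ` A)"

definition algebraic_integer :: "complex \<Rightarrow> bool" where
  "algebraic_integer x \<longleftrightarrow> (\<exists>p :: int poly. lead_coeff p = 1 \<and> poly (map_poly of_int p) x = 0)"

definition ring_of_integers :: "complex set \<Rightarrow> complex set" where
  "ring_of_integers K = {x \<in> K. algebraic_integer x}"

definition frac_ideal :: "complex set \<Rightarrow> complex set \<Rightarrow> bool" where
  "frac_ideal K J \<longleftrightarrow> J \<subseteq> K \<and> 0 \<in> J \<and> J \<noteq> {0}
     \<and> (\<forall>x\<in>J. \<forall>y\<in>J. x + y \<in> J)
     \<and> (\<forall>r\<in>ring_of_integers K. \<forall>x\<in>J. r * x \<in> J)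
     \<and> (\<exists>d\<in>ring_of_integers K. d \<noteq> 0 \<and> (\<forall>x\<in>J. d * x \<in> ring_of_integers K))"

definition ideal_mult :: "complex set \<Rightarrow> complex set \<Rightarrow> complex set" where
  "ideal_mult I J = {(\<Sum>i<n. a i * b i) | (n::nat) (a::nat \<Rightarrow> complex) (b::nat \<Rightarrow> complex). \<forall>i<n. a i \<in> I \<and> b i \<in> J}"

primrec ideal_pow :: "complex set \<Rightarrow> complex set \<Rightarrow> nat \<Rightarrow> complex set" where
  "ideal_pow K J 0 = ring_of_integers K"
| "ideal_pow K J (Suc n) = ideal_mult J (ideal_pow K J n)"

definition principal_frac_ideal :: "complex set \<Rightarrow> complex set \<Rightarrow> bool" where
  "principal_frac_ideal K J \<longleftrightarrow> (\<exists>x\<in>K. x \<noteq> 0 \<and> J = {x * y | y. y \<in> ring_of_integers K})"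

definition class_exponent :: "complex set \<Rightarrow> nat" where
  "class_exponent K = (LEAST e. e > 0 \<and>
     (\<forall>J. frac_ideal K J \<longrightarrow> principal_frac_ideal K (ideal_pow K J e)))"

definition K1 :: "nat \<Rightarrow> complex set set" where
  "K1 u = {QS {p} | p. p \<in> Pstar_neg \<and> class_exponent (QS {p}) dvd u}"

definition K2 :: "nat \<Rightarrow> complex set set" where
  "K2 u = {QS {p1, p2} | p1 p2. p1 \<in> Pstar_neg \<and> p2 \<in> Pstar
      \<and> class_exponent (QS {p1}) dvd u
      \<and> ((p2 < 0 \<and> class_exponent (QS {p2}) dvd u)
         \<or> (p2 > 0 \<and> class_exponent (QS {p1 * p2}) dvd 2 * u))}"

definition K3 :: "nat \<Rightarrow> complex set set" where
  "K3 u = {QS {p1, p2, p3} | p1 p2 p3. p1 \<in> Pstar_neg \<and> p2 \<in> Pstar_neg \<and> p3 \<in> Pstar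
      \<and> QS {p1, p2} \<in> K2 u \<and> QS {p1, p3} \<in> K2 u \<and> QS {p2, p3} \<in> K2 u}"

end

theory Submission
  imports Defs
begin

text \<open>Every field of \<open>K3 u\<close> is the compositum of two fields of \<open>K2 u\<close>:
  \<open>Q(\<surd>p\<^sub>1, \<surd>p\<^sub>2, \<surd>p\<^sub>3)\<close> is generated by \<open>Q(\<surd>p\<^sub>1, \<surd>p\<^sub>2)\<close> and \<open>Q(\<surd>p\<^sub>1, \<surd>p\<^sub>3)\<close>.
  Hence \<open>K3 u\<close> is covered by the image of \<open>K2 u \<times> K2 u\<close> under taking composita.\<close>

lemma gen_field_subset: "S \<subseteq> gen_field S"
  by (auto simp: gen_field_def)

lemma gen_field_least: "is_subfield F \<Longrightarrow> S \<subseteq> F \<Longrightarrow> gen_field S \<subseteq> F"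
  by (auto simp: gen_field_def)

lemma is_subfield_gen_field: "is_subfield (gen_field S)"
  unfolding is_subfield_def gen_field_def by auto

lemma gen_field_mono: "S \<subseteq> T \<Longrightarrow> gen_field S \<subseteq> gen_field T"
  by (meson is_subfield_gen_field gen_field_least gen_field_subset order_trans)

lemma QS_mono: "A \<subseteq> B \<Longrightarrow> QS A \<subseteq> QS B"
  unfolding QS_def by (intro gen_field_mono image_mono)

lemma QS_Un: "QS (A \<union> B) = gen_field (QS A \<union> QS B)"
proof
  have "(\<lambda>a. csqrt (of_int a)) ` (A \<union> B) \<subseteq> QS A \<union> QS B"
    unfolding QS_def image_Un by (intro Un_mono gen_field_subset)
  then show "QS (A \<union> B) \<subseteq> gen_field (QS A \<union> QS B)"
    unfolding QS_def[of "A \<union> B"] by (rule gen_field_mono)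
next
  have "QS A \<union> QS B \<subseteq> QS (A \<union> B)"
    by (intro Un_least QS_mono) auto
  then show "gen_field (QS A \<union> QS B) \<subseteq> QS (A \<union> B)"
    unfolding QS_def[of "A \<union> B"] by (intro gen_field_least is_subfield_gen_field)
qed

lemma K3_subset_composita_K2:
  "K3 u \<subseteq> (\<lambda>(F, G). gen_field (F \<union> G)) ` (K2 u \<times> K2 u)"
proof
  fix K assume "K \<in> K3 u"
  then obtain p1 p2 p3 where K: "K = QS {p1, p2, p3}"
    and K2: "QS {p1, p2} \<in> K2 u" "QS {p1, p3} \<in> K2 u"
    unfolding K3_def by blast
  have "K = gen_field (QS {p1, p2} \<union> QS {p1, p3})"
    using K QS_Un[of "{p1, p2}" "{p1, p3}"] by (simp add: insert_commute)
  with K2 show "K \<in> (\<lambda>(F, G). gen_field (F \<union> G)) ` (K2 u \<times> K2 u)"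
    by (intro image_eqI[where x = "(QS {p1, p2}, QS {p1, p3})"]) auto
qed

theorem mainTheorem5:
  fixes u :: nat
  assumes "u > 0" and "odd u"
    and "finite (K2 u)"
  shows "finite (K3 u)"
  using assms(3) by (intro finite_subset[OF K3_subset_composita_K2]) simp

end
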